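(* Let $r\geq 1$, let $\mathbf a=(a_1,\ldots,a_r)$ be positive integers, and let $D$ be a positive common multiple of $a_1,\ldots,a_r$. Then for every integer $n\geq 0$, $$p_{\mathbf a}(n) = \sum_{j=0}^{\lfloor n/D\rfloor} \binom{r+j-1}{j} f_{\mathbf a}(n-jD).$$
   Context: $p_{\mathbf a}(n)$ is the restricted partition function: the number of integer solutions $(x_1,\ldots,x_r)$ of $a_1x_1+\cdots+a_rx_r=n$ with all $x_i\geq 0$. For $n\geq 0$, $f_{\mathbf a}(n)$ denotes the number of integer tuples $(j_1,\ldots,j_r)$ with $a_1j_1+\cdots+a_rj_r=n$ and $0\leq j_k\leq \frac{D}{a_k}-1$ for $1\leq k\leq r$. *)

theory Defs
  imports Complex_Main
begin

definition restricted_partition :: "nat list \<Rightarrow> nat \<Rightarrow> nat" where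
  "restricted_partition a n =
     card {x :: nat list. length x = length a \<and>
                          (\<Sum>k<length a. a ! k * x ! k) = n}"

definition f_count :: "nat list \<Rightarrow> nat \<Rightarrow> nat \<Rightarrow> nat" where
  "f_count a D n =
     card {j :: nat list. length j = length a \<and>
                          (\<Sum>k<length a. a ! k * j ! k) = n \<and>
                          (\<forall>k<length a. real (j ! k) \<le> real D / real (a ! k) - 1)}"

end

theory Submission
  imports Defs
begin

text \<open>Put b_k = D / a_k. Dividing each coordinate of a solution x of
  a_1 x_1 + ... + a_r x_r = n by b_k writes x_k = q_k b_k + j_k with 0 \<le> j_k < b_k, and then
  n = D (q_1 + ... + q_r) + a_1 j_1 + ... + a_r j_r. Hence the solutions with q_1 + ... + q_r = m
  correspond to pairs of a composition q of m into r nonnegative parts, of which there are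
  binomial(r + m - 1, m), and a tuple j counted by f_a(n - m D).\<close>

lemma real_le_quotient_minus_one_iff:
  fixes c D j :: nat
  assumes "c dvd D"
  shows "real j \<le> real D / real c - 1 \<longleftrightarrow> j < D div c"
proof -
  have "real D / real c = real (D div c)"
    using assms by (simp add: real_of_nat_div)
  then show ?thesis by linarith
qed

lemma f_count_eq_card_digits:
  assumes "\<forall>k<length a. a ! k dvd D"
  shows "f_count a D m =
    card {j. length j = length a \<and> (\<Sum>k<length a. a ! k * j ! k) = m \<and>
             (\<forall>k<length a. j ! k < D div a ! k)}"
  unfolding f_count_def using assms by (simp add: real_le_quotient_minus_one_iff)

definition combine_digits :: "(nat \<Rightarrow> nat) \<Rightarrow> nat list \<Rightarrow> nat list \<Rightarrow> nat list" where
  "combine_digits b q j = map (\<lambda>k. q ! k * b k + j ! k) [0..<length q]"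

lemma bij_betw_combine_digits:
  assumes "\<And>k. k < r \<Longrightarrow> b k > 0"
  shows "bij_betw (\<lambda>(q, j). combine_digits b q j)
           ({q. length q = r} \<times> {j. length j = r \<and> (\<forall>k<r. j ! k < b k)})
           {x. length x = r}"
proof (rule bij_betw_byWitness)
  let ?split = "\<lambda>x. (map (\<lambda>k. x ! k div b k) [0..<r], map (\<lambda>k. x ! k mod b k) [0..<r])"
  show "\<forall>p \<in> {q. length q = r} \<times> {j. length j = r \<and> (\<forall>k<r. j ! k < b k)}.
          ?split ((\<lambda>(q, j). combine_digits b q j) p) = p"
    using assms by (auto simp: combine_digits_def intro!: nth_equalityI)
  show "\<forall>x \<in> {x. length x = r}. (\<lambda>(q, j). combine_digits b q j) (?split x) = x"
    by (auto simp: combine_digits_def intro!: nth_equalityI)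
  show "?split ` {x. length x = r} \<subseteq> {q. length q = r} \<times> {j. length j = r \<and> (\<forall>k<r. j ! k < b k)}"
    using assms by auto
qed (auto simp: combine_digits_def)

lemma weighted_sum_combine_digits:
  fixes a q j :: "nat list"
  assumes "length q = length a" and "\<And>k. k < length a \<Longrightarrow> a ! k * b k = D"
  shows "(\<Sum>k<length a. a ! k * combine_digits b q j ! k) =
           D * sum_list q + (\<Sum>k<length a. a ! k * j ! k)"
proof -
  have "(\<Sum>k<length a. a ! k * combine_digits b q j ! k) =
          (\<Sum>k<length a. D * q ! k + a ! k * j ! k)"
    using assms by (intro sum.cong) (auto simp: combine_digits_def algebra_simps)
  also have "\<dots> = D * sum_list q + (\<Sum>k<length a. a ! k * j ! k)"
    using assms(1) by (simp add: sum.distrib sum_distrib_left sum_list_sum_nth atLeast0LessThan)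
  finally show ?thesis .
qed

lemma finite_lists_sum_eq: "finite {q :: nat list. length q = r \<and> sum_list q = m}"
  by (rule finite_subset[of _ "{xs. set xs \<subseteq> {..m} \<and> length xs = r}"])
     (auto simp: member_le_sum_list intro: finite_lists_length_eq)

lemma finite_lists_bounded: "finite {j :: nat list. length j = r \<and> (\<forall>k<r. j ! k < b k)}"
proof (rule finite_subset[of _ "{xs. set xs \<subseteq> {..\<Sum>k<r. b k} \<and> length xs = r}"])
  have "j ! k \<le> (\<Sum>k<r. b k)" if "k < r" "j ! k < b k" for j :: "nat list" and k
    using that member_le_sum[of k "{..<r}" b] by simp
  then show "{j. length j = r \<and> (\<forall>k<r. j ! k < b k)} \<subseteq> {xs. set xs \<subseteq> {..\<Sum>k<r. b k} \<and> length xs = r}"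
    by (fastforce simp: in_set_conv_nth)
qed (auto intro: finite_lists_length_eq)

lemma card_weighted_lists_eq_sum:
  fixes a :: "nat list" and b :: "nat \<Rightarrow> nat" and D n :: nat
  assumes "D > 0" and "\<And>k. k < length a \<Longrightarrow> a ! k * b k = D"
  shows "card {x. length x = length a \<and> (\<Sum>k<length a. a ! k * x ! k) = n} =
    (\<Sum>m = 0..n div D. card {q. length q = length a \<and> sum_list q = m} *
       card {j. length j = length a \<and> (\<Sum>k<length a. a ! k * j ! k) = n - m * D \<and>
                (\<forall>k<length a. j ! k < b k)})"
proof -
  let ?r = "length a"
  let ?w = "\<lambda>x. \<Sum>k<?r. a ! k * x ! k"
  let ?f = "\<lambda>(q, j). combine_digits b q j"
  define S where "S m = {q :: nat list. length q = ?r \<and> sum_list q = m}" for m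
  define F where "F m = {j :: nat list. length j = ?r \<and> ?w j = m \<and> (\<forall>k<?r. j ! k < b k)}" for m
  define P where "P = {q :: nat list. length q = ?r} \<times> {j. length j = ?r \<and> (\<forall>k<?r. j ! k < b k)}"
  have "b k > 0" if "k < ?r" for k
    using assms that by (metis gr0I mult_0_right)
  then have bij: "bij_betw ?f P {x. length x = ?r}"
    unfolding P_def by (rule bij_betw_combine_digits)
  have "bij_betw ?f {p \<in> P. ?w (?f p) = n} {x \<in> {x. length x = ?r}. ?w x = n}"
    using bij by (rule bij_betw_Collect) (rule refl)
  then have "card {x. length x = ?r \<and> ?w x = n} = card {p \<in> P. ?w (?f p) = n}"
    by (simp add: bij_betw_same_card)
  also have "{p \<in> P. ?w (?f p) = n} = (\<Union>m\<in>{0..n div D}. S m \<times> F (n - m * D))"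
  proof -
    have "?w (?f (q, j)) = sum_list q * D + ?w j" if "length q = ?r" for q j
      using weighted_sum_combine_digits[OF that assms(2)] by (simp add: mult.commute)
    moreover have "sum_list q \<le> n div D" if "sum_list q * D + c = n" for q and c :: nat
      using that assms(1) by (metis div_le_mono le_add1 nonzero_mult_div_cancel_right not_gr0)
    moreover have "m * D \<le> n" if "m \<le> n div D" for m
      using that by (metis div_times_less_eq_dividend le_trans mult_le_mono1)
    ultimately show ?thesis
      by (auto simp: P_def S_def F_def)
  qed
  also have "card \<dots> = (\<Sum>m = 0..n div D. card (S m \<times> F (n - m * D)))"
  proof (rule card_UN_disjoint)
    have "finite (F c)" for c
      by (rule finite_subset[OF _ finite_lists_bounded[of ?r b]]) (auto simp: F_def)
    then show "\<forall>m\<in>{0..n div D}. finite (S m \<times> F (n - m * D))"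
      by (simp add: S_def finite_lists_sum_eq)
  qed (auto simp: S_def)
  finally show ?thesis
    by (simp add: card_cartesian_product S_def F_def)
qed

theorem proposition2p2:
  fixes a :: "nat list" and D n :: nat
  assumes "length a \<ge> 1"
    and "\<forall>k<length a. a ! k > 0"
    and "D > 0"
    and "\<forall>k<length a. a ! k dvd D"
  shows "restricted_partition a n =
         (\<Sum>j = 0..n div D. (length a + j - 1 choose j) * f_count a D (n - j * D))"
proof -
  have "a ! k * (D div a ! k) = D" if "k < length a" for k
    using assms(4) that by simp
  then have "restricted_partition a n =
      (\<Sum>m = 0..n div D. card {q. length q = length a \<and> sum_list q = m} *
         card {j. length j = length a \<and> (\<Sum>k<length a. a ! k * j ! k) = n - m * D \<and>
                  (\<forall>k<length a. j ! k < D div a ! k)})"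
    unfolding restricted_partition_def by (rule card_weighted_lists_eq_sum[OF assms(3)])
  then show ?thesis
    using assms(4) by (simp add: card_length_sum_list f_count_eq_card_digits add.commute)
qed

end
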